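(* Let $T$ be a tree and let $\bar T$ be its complement. Then $L(\bar T)^2$ is a clique (complete graph).
   Context: For a graph $H$, $L(H)^2$ denotes the square of the line graph of $H$: its vertices are the edges of $H$, and two distinct edges $e,f$ of $H$ are adjacent in $L(H)^2$ if they share an endpoint or some edge of $H$ joins an endpoint of $e$ to an endpoint of $f$. *)

theory Defs
  imports Main
begin

definition simple_graph :: "'a set \<Rightarrow> 'a set set \<Rightarrow> bool" where
  "simple_graph V E \<longleftrightarrow> finite V \<and>
     (\<forall>e\<in>E. \<exists>u v. e = {u, v} \<and> u \<noteq> v \<and> u \<in> V \<and> v \<in> V)"

definition adj_rel :: "'a set set \<Rightarrow> ('a \<times> 'a) set" where
  "adj_rel E = {(u, v). {u, v} \<in> E}"

definition graph_connected :: "'a set \<Rightarrow> 'a set set \<Rightarrow> bool" where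
  "graph_connected V E \<longleftrightarrow> (\<forall>u\<in>V. \<forall>v\<in>V. (u, v) \<in> (adj_rel E)\<^sup>*)"

definition is_cycle :: "'a set \<Rightarrow> 'a set set \<Rightarrow> 'a list \<Rightarrow> bool" where
  "is_cycle V E cs \<longleftrightarrow> length cs \<ge> 3 \<and> distinct cs \<and> set cs \<subseteq> V \<and>
     (\<forall>i. Suc i < length cs \<longrightarrow> {cs ! i, cs ! Suc i} \<in> E) \<and>
     {last cs, hd cs} \<in> E"

definition is_tree :: "'a set \<Rightarrow> 'a set set \<Rightarrow> bool" where
  "is_tree V E \<longleftrightarrow> simple_graph V E \<and> V \<noteq> {} \<and> graph_connected V E \<and>
     (\<nexists>cs. is_cycle V E cs)"

definition complement_edges :: "'a set \<Rightarrow> 'a set set \<Rightarrow> 'a set set" where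
  "complement_edges V E = {{u, v} | u v. u \<in> V \<and> v \<in> V \<and> u \<noteq> v \<and> {u, v} \<notin> E}"

definition line_sq_adj :: "'a set set \<Rightarrow> 'a set \<Rightarrow> 'a set \<Rightarrow> bool" where
  "line_sq_adj E e f \<longleftrightarrow> e \<in> E \<and> f \<in> E \<and> e \<noteq> f \<and>
     ((e \<inter> f \<noteq> {}) \<or> (\<exists>x\<in>e. \<exists>y\<in>f. {x, y} \<in> E))"

definition line_sq_clique :: "'a set set \<Rightarrow> bool" where
  "line_sq_clique E \<longleftrightarrow> (\<forall>e\<in>E. \<forall>f\<in>E. e \<noteq> f \<longrightarrow> line_sq_adj E e f)"

end

theory Submission
  imports Defs
begin

text \<open>Two disjoint edges ab and cd of the complement are far apart in L(T)^2 only if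
  all four pairs ac, cb, bd, da are tree edges; but then a-c-b-d is a 4-cycle in T.\<close>

lemma is_cycle_4:
  assumes "distinct [a, c, b, d]" "{a, b, c, d} \<subseteq> V"
    and "{a, c} \<in> E" "{c, b} \<in> E" "{b, d} \<in> E" "{d, a} \<in> E"
  shows "is_cycle V E [a, c, b, d]"
proof -
  have "{[a, c, b, d] ! i, [a, c, b, d] ! Suc i} \<in> E" if "Suc i < 4" for i
  proof -
    have "i = 0 \<or> i = 1 \<or> i = 2" using that by auto
    then show ?thesis using assms(3-5) by auto
  qed
  then show ?thesis
    using assms unfolding is_cycle_def by auto
qed

lemma acyclic_no_4_cycle:
  assumes "\<nexists>cs. is_cycle V E cs" "distinct [a, c, b, d]" "{a, b, c, d} \<subseteq> V"
  shows "\<not> ({a, c} \<in> E \<and> {c, b} \<in> E \<and> {b, d} \<in> E \<and> {d, a} \<in> E)"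
  using assms(1) is_cycle_4[OF assms(2,3)] by metis

theorem lemma2:
  fixes V :: "'a set" and E :: "'a set set"
  assumes "is_tree V E"
  shows "line_sq_clique (complement_edges V E)"
  unfolding line_sq_clique_def
proof (intro ballI impI)
  fix e f
  assume e: "e \<in> complement_edges V E" and f: "f \<in> complement_edges V E" and "e \<noteq> f"
  obtain a b where ab: "e = {a, b}" "a \<in> V" "b \<in> V" "a \<noteq> b"
    using e unfolding complement_edges_def by auto
  obtain c d where cd: "f = {c, d}" "c \<in> V" "d \<in> V" "c \<noteq> d"
    using f unfolding complement_edges_def by auto
  have "e \<inter> f \<noteq> {} \<or> (\<exists>x\<in>e. \<exists>y\<in>f. {x, y} \<in> complement_edges V E)"
  proof (cases "e \<inter> f = {}")
    case True
    then have "distinct [a, c, b, d]" using ab cd by auto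
    then have "\<not> ({a, c} \<in> E \<and> {c, b} \<in> E \<and> {b, d} \<in> E \<and> {d, a} \<in> E)"
      using acyclic_no_4_cycle[of V E a c b d] assms ab cd unfolding is_tree_def by simp
    then show ?thesis
      using ab cd True unfolding complement_edges_def by (auto simp: insert_commute)
  qed simp
  then show "line_sq_adj (complement_edges V E) e f"
    using e f \<open>e \<noteq> f\<close> unfolding line_sq_adj_def by blast
qed

end
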